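(* Let $\mu$ be a finite compactly supported complex Borel measure on $\mathbb{R}^d$. The following are equivalent: (a) $\mu$ is discrete; (b) $\mu_\zeta$ is discrete for all $\zeta\in S$; (c) $\mu_\zeta$ is discrete for $\sigma$-almost every $\zeta\in S$.
   Context: A measure is discrete if it is purely atomic (a countable sum of weighted point masses). $S$ is the unit sphere in $\mathbb{R}^d$ with surface measure $\sigma$; for $\zeta\in S$, $\mu_\zeta$ is the pushforward of $\mu$ under $x\mapsto x\cdot\zeta$, a measure on $\mathbb{R}$. *)

theory Defs
  imports "HOL-Analysis.Analysis"
begin

text \<open>A complex (finite) measure on the measurable space M, given as a complex-valued
  set function that is countably additive on the sets of M.  Being complex-valued it is
  automatically finite.\<close>
definition complex_measure :: "'a measure \<Rightarrow> ('a set \<Rightarrow> complex) \<Rightarrow> bool" where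
  "complex_measure M \<nu> \<longleftrightarrow>
     (\<forall>A :: nat \<Rightarrow> 'a set. range A \<subseteq> sets M \<longrightarrow> disjoint_family A \<longrightarrow>
        (\<lambda>n. \<nu> (A n)) sums \<nu> (\<Union>n. A n))"

definition compactly_supported_cmeasure :: "('a::topological_space set \<Rightarrow> complex) \<Rightarrow> bool" where
  "compactly_supported_cmeasure \<nu> \<longleftrightarrow>
     (\<exists>K. compact K \<and> (\<forall>A \<in> sets borel. A \<inter> K = {} \<longrightarrow> \<nu> A = 0))"

text \<open>Discrete (purely atomic): a countable, absolutely summable sum of weighted point masses,
  i.e. \<nu>(A) = \<Sum>_{x\<in>A} c(x) for an absolutely summable weight function c
  (whose support is then automatically countable).\<close>
definition discrete_cmeasure :: "'a measure \<Rightarrow> ('a set \<Rightarrow> complex) \<Rightarrow> bool" where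
  "discrete_cmeasure M \<nu> \<longleftrightarrow>
     (\<exists>c :: 'a \<Rightarrow> complex. (\<lambda>x. norm (c x)) summable_on UNIV \<and>
        (\<forall>A \<in> sets M. \<nu> A = (\<Sum>\<^sub>\<infinity>x\<in>A. c x)))"

definition proj_cmeasure :: "('a::real_inner set \<Rightarrow> complex) \<Rightarrow> 'a \<Rightarrow> real set \<Rightarrow> complex" where
  "proj_cmeasure \<mu> \<zeta> = (\<lambda>B. \<mu> {x. x \<bullet> \<zeta> \<in> B})"

text \<open>Surface measure on the unit sphere, via the cone construction:
  \<sigma>(A) = d \<cdot> \<lambda>_d({t x | 0 < t \<le> 1, x \<in> A}) for Borel A \<subseteq> S.\<close>
definition sphere_cone :: "'a::euclidean_space set \<Rightarrow> 'a set" where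
  "sphere_cone A = (\<lambda>(t, x). t *\<^sub>R x) ` ({0<..1} \<times> A)"

definition surface_measure :: "'a::euclidean_space measure" where
  "surface_measure = measure_of (sphere 0 1)
      {A. A \<subseteq> sphere 0 1 \<and> A \<in> sets borel}
      (\<lambda>A. of_nat DIM('a) * emeasure lborel (sphere_cone A))"

end

theory Submission
  imports Defs
begin

text \<open>Only (c) \<open>\<Longrightarrow>\<close> (a) needs work. The real and imaginary parts of \<open>\<mu>\<close> are, by the Hahn--Jordan
  decomposition, differences \<open>M\<^sub>1 - M\<^sub>2\<close> of finite measures supported on a compact set \<open>K\<close>.
  Removing the countably many atoms of \<open>M\<^sub>1, M\<^sub>2\<close> leaves diffuse parts \<open>D\<^sub>1, D\<^sub>2\<close>, and by Fubini
  the hyperplanes orthogonal to \<open>\<zeta>\<close> are \<open>D\<^sub>i\<close>-null for \<open>\<sigma>\<close>-almost every \<open>\<zeta>\<close>. In such a direction, if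
  the projection of \<open>M\<^sub>1 - M\<^sub>2\<close> is discrete, then off a countable set of values it vanishes and the
  projections of \<open>D\<^sub>i\<close> and \<open>M\<^sub>i\<close> agree. So \<open>D\<^sub>1\<close> and \<open>D\<^sub>2\<close> have equal projections on a dense set of
  directions; by continuity all their exponential moments \<open>\<integral> exp (x \<bullet> w)\<close> agree, and by
  Stone--Weierstrass on \<open>K\<close> the measures coincide: \<open>M\<^sub>1 - M\<^sub>2\<close> is the sum of its atoms.\<close>

section \<open>Hahn--Jordan decomposition of a real signed measure\<close>

lemma finite_measure_of_nonneg_countably_additive:
  fixes f :: "'a set \<Rightarrow> real"
  assumes nonneg: "\<And>A. A \<in> sets M \<Longrightarrow> f A \<ge> 0"
    and additive: "\<And>A. range A \<subseteq> sets M \<Longrightarrow> disjoint_family A \<Longrightarrow> (\<lambda>n. f (A n)) sums f (\<Union>n. A n)"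
    and "f {} = 0"
  obtains N where "finite_measure N" "sets N = sets M" "\<And>A. A \<in> sets M \<Longrightarrow> measure N A = f A"
    "\<And>A. A \<in> sets M \<Longrightarrow> emeasure N A = ennreal (f A)"
proof -
  define N where "N = measure_of (space M) (sets M) (\<lambda>A. ennreal (f A))"
  have sets_N: "sets N = sets M" unfolding N_def by simp
  have "positive (sets M) (\<lambda>A. ennreal (f A))" unfolding positive_def using \<open>f {} = 0\<close> by simp
  moreover have "countably_additive (sets M) (\<lambda>A. ennreal (f A))"
    unfolding countably_additive_def
  proof (intro allI impI)
    fix A :: "nat \<Rightarrow> 'a set" assume A: "range A \<subseteq> sets M" "disjoint_family A" "\<Union> (range A) \<in> sets M"
    have "(\<lambda>n. ennreal (f (A n))) sums ennreal (f (\<Union>n. A n))"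
      using additive[OF A(1,2)] nonneg A by (subst sums_ennreal) auto
    thus "(\<Sum>i. ennreal (f (A i))) = ennreal (f (\<Union> (range A)))" by (simp add: sums_iff)
  qed
  ultimately have emeasure_N: "emeasure N A = ennreal (f A)" if "A \<in> sets M" for A
    unfolding N_def by (rule emeasure_measure_of_sigma[OF sets.sigma_algebra_axioms _ _ that])
  show ?thesis
  proof (rule that[OF _ sets_N _ emeasure_N])
    show "finite_measure N"
      using emeasure_N[of "space M"] sets_eq_imp_space_eq[OF sets_N] by (intro finite_measureI) simp
    show "measure N A = f A" if "A \<in> sets M" for A
      using emeasure_N[OF that] nonneg[OF that] by (simp add: measure_def)
  qed
qed

locale signed_measure =
  fixes M :: "'a measure" and \<nu> :: "'a set \<Rightarrow> real"
  assumes signed_countably_additive: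
    "\<And>A. range A \<subseteq> sets M \<Longrightarrow> disjoint_family A \<Longrightarrow> (\<lambda>n. \<nu> (A n)) sums \<nu> (\<Union>n. A n)"
begin

lemma signed_empty: "\<nu> {} = 0"
proof -
  have "(\<lambda>n. \<nu> {}) sums \<nu> {}"
    using signed_countably_additive[of "\<lambda>_. {}"] by (auto simp: disjoint_family_on_def)
  hence "(\<lambda>n. \<nu> {}) \<longlonglongrightarrow> 0" by (intro summable_LIMSEQ_zero sums_summable)
  thus ?thesis by (simp add: LIMSEQ_const_iff)
qed

lemma signed_Un:
  assumes "A \<in> sets M" "B \<in> sets M" "A \<inter> B = {}"
  shows "\<nu> (A \<union> B) = \<nu> A + \<nu> B"
proof -
  have "(\<lambda>n. \<nu> (binaryset A B n)) sums \<nu> (\<Union>n. binaryset A B n)"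
    using assms by (intro signed_countably_additive) (auto simp: binaryset_def disjoint_family_on_def)
  moreover have "(\<lambda>n. \<nu> (binaryset A B n)) sums (\<nu> A + \<nu> B)"
    by (rule binaryset_sums) (rule signed_empty)
  ultimately show ?thesis by (simp add: range_binaryset_eq sums_unique2 UNION_eq[symmetric])
qed

lemma signed_Int_Diff:
  assumes "A \<in> sets M" "B \<in> sets M"
  shows "\<nu> A = \<nu> (A \<inter> B) + \<nu> (A - B)"
  using signed_Un[of "A \<inter> B" "A - B"] assms by (simp add: Int_Diff_Un Int_Diff_disjoint)

definition positive_set :: "'a set \<Rightarrow> bool" where
  "positive_set P \<longleftrightarrow> P \<in> sets M \<and> (\<forall>E\<in>sets M. E \<subseteq> P \<longrightarrow> \<nu> E \<ge> 0)"

lemma positive_set_empty: "positive_set {}"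
  by (auto simp: positive_set_def signed_empty)

lemma positive_set_le:
  assumes "positive_set Q" "P \<in> sets M" "P \<subseteq> Q"
  shows "\<nu> P \<le> \<nu> Q"
  using signed_Int_Diff[of Q P] assms by (auto simp: positive_set_def Int_absorb1)

lemma positive_set_UN:
  fixes P :: "nat \<Rightarrow> 'a set"
  assumes "\<And>n. positive_set (P n)"
  shows "positive_set (\<Union>n. P n)"
  unfolding positive_set_def
proof (intro conjI ballI impI)
  have P: "range P \<subseteq> sets M" using assms by (auto simp: positive_set_def)
  thus "(\<Union>n. P n) \<in> sets M" using sets.countable_nat_UN[of P M] by simp
  fix E assume E: "E \<in> sets M" "E \<subseteq> (\<Union>n. P n)"
  define D where "D n = E \<inter> disjointed P n" for n
  have D: "range D \<subseteq> sets M"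
    using sets.range_disjointed_sets[OF P] E unfolding D_def by auto
  have "disjoint_family D"
    using disjoint_family_disjointed[of P] by (auto simp: D_def disjoint_family_on_def)
  hence "(\<lambda>n. \<nu> (D n)) sums \<nu> (\<Union>n. D n)" using D signed_countably_additive by blast
  moreover have "(\<Union>n. D n) = E" using E UN_disjointed_eq[of P] by (auto simp: D_def)
  moreover have "\<nu> (D n) \<ge> 0" for n
  proof -
    have "D n \<in> sets M" "D n \<subseteq> P n" using D disjointed_subset[of P n] by (auto simp: D_def)
    thus ?thesis using assms[of n] unfolding positive_set_def by blast
  qed
  ultimately show "\<nu> E \<ge> 0" using sums_le[of "\<lambda>_. 0" "\<lambda>n. \<nu> (D n)" 0] by auto
qed

lemma positive_set_Un:
  assumes "positive_set P" "positive_set Q"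
  shows "positive_set (P \<union> Q)"
  using positive_set_UN[of "binaryset P Q"] assms positive_set_empty
  by (simp add: binaryset_def range_binaryset_eq UNION_eq[symmetric])

lemma exists_greedy_negative_subset:
  "\<exists>E. E \<in> sets M \<and> E \<subseteq> X \<and> \<nu> E \<le> 0 \<and>
     (\<forall>n. (\<exists>F\<in>sets M. F \<subseteq> X \<and> \<nu> F < - 1 / real (Suc n)) \<longrightarrow> \<nu> E < - 1 / real (Suc n))"
proof (cases "\<exists>n. \<exists>F\<in>sets M. F \<subseteq> X \<and> \<nu> F < - 1 / real (Suc n)")
  case True
  define m where "m = (LEAST n. \<exists>F\<in>sets M. F \<subseteq> X \<and> \<nu> F < - 1 / real (Suc n))"
  obtain E where E: "E \<in> sets M" "E \<subseteq> X" "\<nu> E < - 1 / real (Suc m)"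
    using LeastI_ex[OF True] unfolding m_def by blast
  have "\<nu> E < - 1 / real (Suc n)" if "\<exists>F\<in>sets M. F \<subseteq> X \<and> \<nu> F < - 1 / real (Suc n)" for n
  proof -
    have "m \<le> n" unfolding m_def using that by (rule Least_le)
    hence "- 1 / real (Suc m) \<le> - 1 / real (Suc n)" by (simp add: frac_le)
    thus ?thesis using E by linarith
  qed
  moreover have "- 1 / real (Suc m) < 0" by simp
  hence "\<nu> E \<le> 0" using E(3) by linarith
  ultimately show ?thesis using E by blast
next
  case False
  thus ?thesis by (intro exI[of _ "{}"]) (auto simp: signed_empty)
qed

text \<open>Greedily remove from \<open>A\<close> subsets that are nearly as negative as possible. The removed values
  are summable, hence tend to \<open>0\<close>, so no subset of negative measure survives.\<close>
lemma exists_positive_subset: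
  assumes A: "A \<in> sets M"
  shows "\<exists>P. positive_set P \<and> P \<subseteq> A \<and> \<nu> A \<le> \<nu> P"
proof -
  obtain pick where pick: "\<forall>X. pick X \<in> sets M \<and> pick X \<subseteq> X \<and> \<nu> (pick X) \<le> 0 \<and>
      (\<forall>n. (\<exists>F\<in>sets M. F \<subseteq> X \<and> \<nu> F < - 1 / real (Suc n)) \<longrightarrow> \<nu> (pick X) < - 1 / real (Suc n))"
    using choice[OF allI[OF exists_greedy_negative_subset]] by (erule exE)
  note pick = pick[rule_format]
  define X where "X k = ((\<lambda>Y. Y - pick Y) ^^ k) A" for k
  define E where "E k = pick (X k)" for k
  have X_Suc: "X (Suc k) = X k - E k" for k unfolding X_def E_def by simp
  have X: "X k \<in> sets M" for k
    by (induction k) (auto simp: X_Suc E_def pick A X_def[of 0])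
  have E: "E k \<in> sets M" "E k \<subseteq> X k" "\<nu> (E k) \<le> 0" for k
    unfolding E_def using pick by auto
  have X_decseq: "X (k + j) \<subseteq> X k" for k j
    by (induction j) (auto simp: X_Suc)
  have "X k \<subseteq> A" for k using X_decseq[of 0 k] by (simp add: X_def)
  hence UE_sub: "(\<Union>k. E k) \<subseteq> A" using E by blast
  have "disjoint_family E"
  proof -
    have "E i \<inter> E j = {}" if "i < j" for i j
      using E(2)[of j] X_decseq[of "Suc i" "j - Suc i"] X_Suc[of i] that by auto
    thus ?thesis unfolding disjoint_family_on_def by (metis Int_commute linorder_neqE_nat)
  qed
  hence E_sums: "(\<lambda>k. \<nu> (E k)) sums \<nu> (\<Union>k. E k)" using signed_countably_additive E by auto
  define P where "P = A - (\<Union>k. E k)"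
  have P_sub: "P \<subseteq> X k" for k
    by (induction k) (auto simp: P_def X_def[of 0] X_Suc)
  have "positive_set P" unfolding positive_set_def
  proof (intro conjI ballI impI)
    show "P \<in> sets M" using A E by (auto simp: P_def)
    fix F assume F: "F \<in> sets M" "F \<subseteq> P"
    show "\<nu> F \<ge> 0"
    proof (rule ccontr)
      assume "\<not> \<nu> F \<ge> 0"
      then obtain n where n: "1 / real (Suc n) < - \<nu> F"
        using reals_Archimedean[of "- \<nu> F"] by (auto simp: inverse_eq_divide)
      have "\<nu> (E k) \<le> - 1 / real (Suc n)" for k
      proof -
        have "\<exists>F'\<in>sets M. F' \<subseteq> X k \<and> \<nu> F' < - 1 / real (Suc n)"
          using F P_sub[of k] n by (intro bexI[of _ F]) auto
        thus ?thesis using pick[of "X k"] unfolding E_def by (meson less_imp_le)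
      qed
      moreover have "(\<lambda>k. \<nu> (E k)) \<longlonglongrightarrow> 0"
        using E_sums by (intro summable_LIMSEQ_zero sums_summable)
      ultimately have "0 \<le> - 1 / real (Suc n)" by (intro LIMSEQ_le_const2) auto
      thus False by simp
    qed
  qed
  moreover have "\<nu> (\<Union>k. E k) \<le> 0"
    using E_sums E(3) sums_le[of "\<lambda>k. \<nu> (E k)" "\<lambda>_. 0"] by auto
  hence "\<nu> A \<le> \<nu> P"
    using signed_Int_Diff[of A "\<Union>k. E k"] A E UE_sub by (simp add: P_def Int_absorb1)
  ultimately show ?thesis unfolding P_def by blast
qed

lemma bdd_above_positive_sets: "bdd_above (\<nu> ` Collect positive_set)"
proof (rule ccontr)
  assume "\<not> bdd_above (\<nu> ` Collect positive_set)"
  hence "\<forall>n::nat. \<exists>P. positive_set P \<and> \<nu> P > real n"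
    unfolding bdd_above_def by (auto simp: not_le)
  then obtain P where P: "\<And>n. positive_set (P n)" "\<And>n. \<nu> (P n) > real n" by metis
  obtain n where "real n > \<nu> (\<Union>n. P n)" using reals_Archimedean2 by blast
  moreover have "positive_set (\<Union>n. P n)" using P(1) by (rule positive_set_UN)
  hence "\<nu> (P n) \<le> \<nu> (\<Union>n. P n)"
    using positive_set_le P(1)[of n] by (auto simp: positive_set_def)
  ultimately show False using P(2)[of n] by linarith
qed

theorem Hahn_decomposition:
  "\<exists>P. positive_set P \<and> (\<forall>E\<in>sets M. E \<inter> P = {} \<longrightarrow> \<nu> E \<le> 0)"
proof -
  let ?S = "\<nu> ` Collect positive_set"
  note bdd = bdd_above_positive_sets
  define s where "s = Sup ?S"
  have "\<exists>P. positive_set P \<and> \<nu> P > s - 1 / real (Suc n)" for n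
  proof -
    have "s - 1 / real (Suc n) < s" by simp
    then obtain y where "y \<in> ?S" "s - 1 / real (Suc n) < y"
      using less_cSup_iff[OF _ bdd] positive_set_empty unfolding s_def by blast
    thus ?thesis by blast
  qed
  then obtain P where P: "\<And>n. positive_set (P n)" "\<And>n. \<nu> (P n) > s - 1 / real (Suc n)" by metis
  define Q where "Q = (\<Union>n. P n)"
  have Q: "positive_set Q" using P positive_set_UN unfolding Q_def by blast
  have "\<nu> Q \<ge> s"
  proof (rule ccontr)
    assume "\<not> \<nu> Q \<ge> s"
    then obtain n where "1 / real (Suc n) < s - \<nu> Q"
      using reals_Archimedean[of "s - \<nu> Q"] by (auto simp: inverse_eq_divide)
    moreover have "\<nu> (P n) \<le> \<nu> Q"
      using positive_set_le[OF Q] P(1)[of n] by (auto simp: positive_set_def Q_def)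
    ultimately show False using P(2)[of n] by linarith
  qed
  have "\<nu> E \<le> 0" if E: "E \<in> sets M" "E \<inter> Q = {}" for E
  proof (rule ccontr)
    assume "\<not> \<nu> E \<le> 0"
    obtain P' where P': "positive_set P'" "P' \<subseteq> E" "\<nu> E \<le> \<nu> P'"
      using exists_positive_subset[OF E(1)] by blast
    have "\<nu> (Q \<union> P') \<le> s"
      unfolding s_def using bdd positive_set_Un[OF Q P'(1)] by (auto intro: cSup_upper)
    moreover have "\<nu> (Q \<union> P') = \<nu> Q + \<nu> P'"
      using signed_Un[of Q P'] Q P' E by (auto simp: positive_set_def)
    ultimately show False using \<open>\<nu> Q \<ge> s\<close> P'(3) \<open>\<not> \<nu> E \<le> 0\<close> by linarith
  qed
  thus ?thesis using Q by blast
qed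

theorem Jordan_decomposition:
  obtains M1 M2 where "\<And>A. A \<in> sets M \<Longrightarrow> \<nu> A = measure M1 A - measure M2 A"
    "finite_measure M1" "finite_measure M2" "sets M1 = sets M" "sets M2 = sets M"
    "\<And>A. A \<in> sets M \<Longrightarrow> \<forall>B\<in>sets M. B \<subseteq> A \<longrightarrow> \<nu> B = 0 \<Longrightarrow>
       emeasure M1 A = 0 \<and> emeasure M2 A = 0"
proof -
  obtain P where P: "positive_set P" "\<And>E. E \<in> sets M \<Longrightarrow> E \<inter> P = {} \<Longrightarrow> \<nu> E \<le> 0"
    using Hahn_decomposition by blast
  have P_sets: "P \<in> sets M" using P by (simp add: positive_set_def)
  have additive: "(\<lambda>n. \<nu> (A n \<inter> S)) sums \<nu> ((\<Union>n. A n) \<inter> S)"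
    if "S \<in> sets M" "range A \<subseteq> sets M" "disjoint_family A" for A S
  proof -
    have "(\<lambda>n. \<nu> (A n \<inter> S)) sums \<nu> (\<Union>n. A n \<inter> S)"
      using that by (intro signed_countably_additive) (auto simp: disjoint_family_on_def)
    moreover have "(\<Union>n. A n) \<inter> S = (\<Union>n. A n \<inter> S)" by blast
    ultimately show ?thesis by (simp only:)
  qed
  obtain M1 where M1: "finite_measure M1" "sets M1 = sets M"
    "\<And>A. A \<in> sets M \<Longrightarrow> measure M1 A = \<nu> (A \<inter> P)"
    "\<And>A. A \<in> sets M \<Longrightarrow> emeasure M1 A = ennreal (\<nu> (A \<inter> P))"
  proof (rule finite_measure_of_nonneg_countably_additive[of M "\<lambda>A. \<nu> (A \<inter> P)"])
    show "\<nu> (A \<inter> P) \<ge> 0" if "A \<in> sets M" for A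
      using P(1) P_sets that by (auto simp: positive_set_def)
    show "(\<lambda>n. \<nu> (A n \<inter> P)) sums \<nu> ((\<Union>n. A n) \<inter> P)"
      if "range A \<subseteq> sets M" "disjoint_family A" for A
      using additive[OF P_sets that] .
    show "\<nu> ({} \<inter> P) = 0" using signed_empty by simp
  qed (rule that)
  obtain M2 where M2: "finite_measure M2" "sets M2 = sets M"
    "\<And>A. A \<in> sets M \<Longrightarrow> measure M2 A = - \<nu> (A \<inter> (space M - P))"
    "\<And>A. A \<in> sets M \<Longrightarrow> emeasure M2 A = ennreal (- \<nu> (A \<inter> (space M - P)))"
  proof (rule finite_measure_of_nonneg_countably_additive[of M "\<lambda>A. - \<nu> (A \<inter> (space M - P))"])
    show "- \<nu> (A \<inter> (space M - P)) \<ge> 0" if "A \<in> sets M" for A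
      using P(2)[of "A \<inter> (space M - P)"] P_sets that by auto
    show "(\<lambda>n. - \<nu> (A n \<inter> (space M - P))) sums - \<nu> ((\<Union>n. A n) \<inter> (space M - P))"
      if "range A \<subseteq> sets M" "disjoint_family A" for A
      by (rule sums_minus, rule additive) (use that P_sets in auto)
    show "- \<nu> ({} \<inter> (space M - P)) = 0" using signed_empty by simp
  qed (rule that)
  have Diff_P: "A \<inter> (space M - P) = A - P" if "A \<in> sets M" for A
    using sets.sets_into_space[OF that] by blast
  have "\<nu> A = measure M1 A - measure M2 A" if A: "A \<in> sets M" for A
    using signed_Int_Diff[OF A P_sets] by (simp add: M1(3)[OF A] M2(3)[OF A] Diff_P[OF A])
  moreover have "emeasure M1 A = 0 \<and> emeasure M2 A = 0"
    if A: "A \<in> sets M" and null: "\<forall>B\<in>sets M. B \<subseteq> A \<longrightarrow> \<nu> B = 0" for A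
    using null[rule_format, of "A \<inter> P"] null[rule_format, of "A - P"] A P_sets
    by (auto simp: M1(4)[OF A] M2(4)[OF A] Diff_P[OF A])
  ultimately show ?thesis using that[OF _ M1(1) M2(1) M1(2) M2(2)] by blast
qed

end

section \<open>Surface measure on the unit sphere\<close>

lemma mem_sphere_cone_iff:
  fixes A :: "'a::euclidean_space set"
  assumes "A \<subseteq> sphere 0 1"
  shows "y \<in> sphere_cone A \<longleftrightarrow> y \<noteq> 0 \<and> norm y \<le> 1 \<and> y /\<^sub>R norm y \<in> A"
proof
  assume "y \<in> sphere_cone A"
  then obtain t x where "t \<in> {0<..1}" "x \<in> A" "y = t *\<^sub>R x" unfolding sphere_cone_def by auto
  moreover have "norm x = 1" using \<open>x \<in> A\<close> assms by auto
  ultimately show "y \<noteq> 0 \<and> norm y \<le> 1 \<and> y /\<^sub>R norm y \<in> A" by auto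
next
  assume y: "y \<noteq> 0 \<and> norm y \<le> 1 \<and> y /\<^sub>R norm y \<in> A"
  hence "y = (\<lambda>(t, x). t *\<^sub>R x) (norm y, y /\<^sub>R norm y)" "(norm y, y /\<^sub>R norm y) \<in> {0<..1} \<times> A"
    by auto
  thus "y \<in> sphere_cone A" unfolding sphere_cone_def by blast
qed

lemma sets_sphere_cone:
  fixes A :: "'a::euclidean_space set"
  assumes "A \<subseteq> sphere 0 1" "A \<in> sets borel"
  shows "sphere_cone A \<in> sets borel"
proof -
  have "(\<lambda>y::'a. y /\<^sub>R norm y) \<in> borel_measurable borel" by measurable
  hence "(\<lambda>y::'a. y /\<^sub>R norm y) -` A \<inter> space borel \<in> sets borel" using assms(2) by (rule measurable_sets)
  moreover have "{y::'a. y \<noteq> 0 \<and> norm y \<le> 1} \<in> sets borel" by measurable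
  moreover have "sphere_cone A = {y. y \<noteq> 0 \<and> norm y \<le> 1} \<inter> ((\<lambda>y. y /\<^sub>R norm y) -` A \<inter> space borel)"
    using mem_sphere_cone_iff[OF assms(1)] by auto
  ultimately show ?thesis by auto
qed

lemma sets_surface_measure:
  "sets (surface_measure :: 'a::euclidean_space measure) = {A. A \<subseteq> sphere 0 1 \<and> A \<in> sets borel}"
  and space_surface_measure: "space (surface_measure :: 'a measure) = sphere 0 1"
  and emeasure_surface_measure: "A \<in> sets (surface_measure :: 'a measure) \<Longrightarrow>
    emeasure surface_measure A = of_nat DIM('a) * emeasure lborel (sphere_cone A)"
proof -
  let ?S = "{A. A \<subseteq> sphere (0::'a) 1 \<and> A \<in> sets borel}"
  have "sets (restrict_space borel (sphere (0::'a) 1)) = ?S"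
    by (auto simp: sets_restrict_space_iff subset_eq)
  hence sa: "sigma_algebra (sphere (0::'a) 1) ?S"
    using sets.sigma_algebra_axioms[of "restrict_space borel (sphere (0::'a) 1)"]
    by (simp add: space_restrict_space)
  thus sets_eq: "sets (surface_measure :: 'a measure) = ?S"
    unfolding surface_measure_def by (simp add: sigma_algebra.sets_measure_of_eq)
  show "space (surface_measure :: 'a measure) = sphere 0 1"
    unfolding surface_measure_def by (simp add: space_measure_of_conv)
  let ?\<sigma> = "\<lambda>A. of_nat DIM('a) * emeasure lborel (sphere_cone (A::'a set))"
  have "positive ?S ?\<sigma>" unfolding positive_def sphere_cone_def by simp
  moreover have "countably_additive ?S ?\<sigma>"
    unfolding countably_additive_def
  proof (intro allI impI)
    fix A :: "nat \<Rightarrow> 'a set" assume A: "range A \<subseteq> ?S" "disjoint_family A" "\<Union> (range A) \<in> ?S"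
    have "range (\<lambda>i. sphere_cone (A i)) \<subseteq> sets lborel"
      using A(1) by (auto intro: sets_sphere_cone)
    moreover have "disjoint_family (\<lambda>i. sphere_cone (A i))"
      using A(1,2) mem_sphere_cone_iff unfolding disjoint_family_on_def
      by (smt (verit, ccfv_threshold) UNIV_I disjoint_iff image_subset_iff mem_Collect_eq)
    ultimately have "(\<Sum>i. emeasure lborel (sphere_cone (A i))) = emeasure lborel (\<Union>i. sphere_cone (A i))"
      by (rule suminf_emeasure)
    moreover have "(\<Union>i. sphere_cone (A i)) = sphere_cone (\<Union>i. A i)"
      unfolding sphere_cone_def by auto
    ultimately show "(\<Sum>i. ?\<sigma> (A i)) = ?\<sigma> (\<Union> (range A))"
      by (simp add: ennreal_suminf_cmult)
  qed
  ultimately show "emeasure surface_measure A = ?\<sigma> A" if "A \<in> sets (surface_measure :: 'a measure)"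
    unfolding surface_measure_def
    by (rule emeasure_measure_of_sigma[OF sa]) (use that sets_eq in auto)
qed

lemma finite_measure_surface_measure: "finite_measure (surface_measure :: 'a::euclidean_space measure)"
proof (rule finite_measureI)
  have "sphere_cone (sphere (0::'a) 1) \<subseteq> ball 0 2" unfolding sphere_cone_def by auto
  hence "emeasure lborel (sphere_cone (sphere (0::'a) 1)) \<le> emeasure lborel (ball (0::'a) 2)"
    by (intro emeasure_mono) auto
  also have "\<dots> < \<infinity>" by (rule emeasure_lborel_ball_finite)
  finally have "emeasure (surface_measure :: 'a measure) (sphere 0 1) < \<infinity>"
    by (simp add: emeasure_surface_measure sets_surface_measure ennreal_mult_less_top of_nat_less_top)
  thus "emeasure (surface_measure :: 'a measure) (space surface_measure) \<noteq> \<infinity>"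
    by (simp add: space_surface_measure)
qed

lemma emeasure_surface_measure_orthogonal:
  fixes v :: "'a::euclidean_space"
  assumes "v \<noteq> 0"
  shows "emeasure surface_measure {z \<in> sphere 0 1. z \<bullet> v = 0} = 0"
proof -
  let ?A = "{z \<in> sphere (0::'a) 1. z \<bullet> v = 0}"
  have A: "?A \<in> sets borel" by measurable
  have "negligible {x::'a. v \<bullet> x = 0}" using negligible_hyperplane assms by blast
  hence "{x::'a. v \<bullet> x = 0} \<in> null_sets lebesgue" by (simp add: negligible_iff_null_sets)
  moreover have "{x::'a. v \<bullet> x = 0} \<in> sets lborel" by measurable
  ultimately have "{x::'a. v \<bullet> x = 0} \<in> null_sets lborel" using null_sets_completion_iff by blast
  moreover have "?A \<subseteq> sphere 0 1" by blast
  hence "sphere_cone ?A \<in> sets lborel" using sets_sphere_cone[OF _ A] by simp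
  moreover have "sphere_cone ?A \<subseteq> {x. v \<bullet> x = 0}"
    unfolding sphere_cone_def by (auto simp: inner_commute)
  ultimately have "sphere_cone ?A \<in> null_sets lborel" by (rule null_sets_subset)
  moreover have "?A \<in> sets surface_measure" unfolding sets_surface_measure using A by blast
  ultimately show ?thesis by (simp add: emeasure_surface_measure null_setsD1)
qed

text \<open>A cap of radius \<open>r\<close> around \<open>z0\<close> contains, via the cone construction, a ball of radius
  \<open>min 1 r / 4\<close> around \<open>z0 / 2\<close>.\<close>
lemma emeasure_surface_measure_cap_pos:
  fixes z0 :: "'a::euclidean_space"
  assumes "z0 \<in> sphere 0 1" "r > 0"
  shows "emeasure surface_measure (sphere 0 1 \<inter> ball z0 r) > 0"
proof -
  let ?A = "sphere (0::'a) 1 \<inter> ball z0 r"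
  have A: "?A \<in> sets borel" by measurable
  define d where "d = min 1 r / 4"
  have d: "d > 0" "d \<le> 1/4" "4 * d \<le> r" using assms unfolding d_def by auto
  have "ball (z0 /\<^sub>R 2) d \<subseteq> sphere_cone ?A"
  proof
    fix y assume "y \<in> ball (z0 /\<^sub>R 2) d"
    hence dy: "norm (y - z0 /\<^sub>R 2) < d" by (simp add: dist_norm norm_minus_commute)
    have "\<bar>norm y - norm (z0 /\<^sub>R 2)\<bar> \<le> norm (y - z0 /\<^sub>R 2)" by (rule norm_triangle_ineq3)
    hence ny: "\<bar>norm y - 1/2\<bar> < d" using dy assms(1) by simp
    hence y: "norm y > 0" "norm y \<le> 1" using d by auto
    have "y /\<^sub>R norm y - z0 = (y /\<^sub>R norm y - 2 *\<^sub>R y) + 2 *\<^sub>R (y - z0 /\<^sub>R 2)"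
      by (simp add: algebra_simps)
    hence "norm (y /\<^sub>R norm y - z0) \<le> norm (y /\<^sub>R norm y - 2 *\<^sub>R y) + 2 * norm (y - z0 /\<^sub>R 2)"
      by (metis norm_triangle_ineq norm_scaleR abs_numeral real_norm_def)
    also have "y /\<^sub>R norm y - 2 *\<^sub>R y = (1 / norm y - 2) *\<^sub>R y"
      by (simp add: algebra_simps divide_inverse)
    also have "norm \<dots> = \<bar>(1 / norm y - 2) * norm y\<bar>" by (simp add: abs_mult)
    also have "(1 / norm y - 2) * norm y = 1 - 2 * norm y" using y by (simp add: field_simps)
    finally have "dist z0 (y /\<^sub>R norm y) < r"
      using ny dy d by (simp add: dist_norm norm_minus_commute)
    thus "y \<in> sphere_cone ?A" using mem_sphere_cone_iff[of ?A y] y by auto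
  qed
  hence "emeasure lborel (ball (z0 /\<^sub>R 2) d) \<le> emeasure lborel (sphere_cone ?A)"
    using sets_sphere_cone[of ?A] A by (intro emeasure_mono) auto
  moreover have "0 < emeasure lborel (ball (z0 /\<^sub>R 2) d)"
    using d by (simp add: emeasure_ball unit_ball_vol_pos ennreal_less_zero_iff)
  ultimately show ?thesis
    using A by (simp add: emeasure_surface_measure sets_surface_measure ennreal_zero_less_mult_iff)
qed

lemma AE_surface_measure_tendsto:
  assumes "AE z in surface_measure. P z" "z0 \<in> sphere 0 1"
  obtains zs where "\<And>k. zs k \<in> sphere 0 1" "\<And>k. P (zs k)" "zs \<longlonglongrightarrow> z0"
proof -
  obtain N where N: "{z \<in> sphere 0 1. \<not> P z} \<subseteq> N" "N \<in> sets surface_measure"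
    "emeasure surface_measure N = 0"
    using assms(1) by (auto elim!: AE_E simp: space_surface_measure)
  have "\<forall>k. \<exists>z. z \<in> sphere 0 1 \<and> P z \<and> dist z z0 < 1 / real (Suc k)"
  proof (rule allI, rule ccontr)
    fix k assume "\<not> (\<exists>z. z \<in> sphere 0 1 \<and> P z \<and> dist z z0 < 1 / real (Suc k))"
    hence "sphere 0 1 \<inter> ball z0 (1 / real (Suc k)) \<subseteq> N" using N(1) by (auto simp: dist_commute)
    hence "emeasure surface_measure (sphere 0 1 \<inter> ball z0 (1 / real (Suc k))) \<le> emeasure surface_measure N"
      using N(2) by (rule emeasure_mono)
    thus False using emeasure_surface_measure_cap_pos[OF assms(2), of "1 / real (Suc k)"] N(3) by simp
  qed
  then obtain zs where zs: "\<And>k. zs k \<in> sphere 0 1" "\<And>k. P (zs k)" "\<And>k. dist (zs k) z0 < 1 / real (Suc k)"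
    by metis
  have "zs \<longlonglongrightarrow> z0"
  proof (rule LIMSEQ_I)
    fix e :: real assume "e > 0"
    then obtain k0 where k0: "inverse (real (Suc k0)) < e" using reals_Archimedean by blast
    have "norm (zs k - z0) < e" if "k \<ge> k0" for k
    proof -
      have "1 / real (Suc k) \<le> 1 / real (Suc k0)" using that by (simp add: frac_le)
      thus ?thesis using zs(3)[of k] k0 by (simp add: dist_norm inverse_eq_divide)
    qed
    thus "\<exists>k0. \<forall>k\<ge>k0. norm (zs k - z0) < e" by blast
  qed
  thus ?thesis using zs that by blast
qed

section \<open>Almost every direction sees no mass on hyperplanes\<close>

lemma null_sets_pair_diagonal:
  fixes N :: "'a::euclidean_space measure"
  assumes "finite_measure N" "sets N = sets borel" "\<And>x. emeasure N {x} = 0"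
  shows "{p \<in> space (N \<Otimes>\<^sub>M N). fst p = snd p} \<in> null_sets (N \<Otimes>\<^sub>M N)"
proof -
  interpret N: finite_measure N by fact
  interpret pair_sigma_finite N N ..
  let ?D = "{p \<in> space (N \<Otimes>\<^sub>M N). fst p = snd p}"
  have borel: "N \<Otimes>\<^sub>M N \<rightarrow>\<^sub>M N = N \<Otimes>\<^sub>M N \<rightarrow>\<^sub>M borel"
    by (rule measurable_cong_sets[OF refl assms(2)])
  have "fst \<in> N \<Otimes>\<^sub>M N \<rightarrow>\<^sub>M N" "snd \<in> N \<Otimes>\<^sub>M N \<rightarrow>\<^sub>M N" by measurable
  hence "(\<lambda>p. fst p - snd p) \<in> borel_measurable (N \<Otimes>\<^sub>M N)" unfolding borel by measurable
  hence "{p \<in> space (N \<Otimes>\<^sub>M N). fst p - snd p = 0} \<in> sets (N \<Otimes>\<^sub>M N)" by measurable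
  hence D: "?D \<in> sets (N \<Otimes>\<^sub>M N)" by simp
  have "emeasure (N \<Otimes>\<^sub>M N) ?D = (\<integral>\<^sup>+x. emeasure N (Pair x -` ?D) \<partial>N)"
    by (rule N.emeasure_pair_measure_alt[OF D])
  also have "\<dots> = (\<integral>\<^sup>+x. 0 \<partial>N)"
  proof (rule nn_integral_cong)
    fix x
    have "Pair x -` ?D = {x}"
      using sets_eq_imp_space_eq[OF assms(2)] by (auto simp: space_pair_measure)
    thus "emeasure N (Pair x -` ?D) = 0" by (simp add: assms(3))
  qed
  finally show ?thesis using D by (simp add: null_sets_def)
qed

lemma measurable_surface_measure_ident:
  "(\<lambda>z. z) \<in> surface_measure \<rightarrow>\<^sub>M (borel :: 'a::euclidean_space measure)"
proof (rule measurableI)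
  fix A :: "'a set" assume "A \<in> sets borel"
  moreover have "sphere (0::'a) 1 \<in> sets borel" by simp
  ultimately show "(\<lambda>z. z) -` A \<inter> space surface_measure \<in> sets surface_measure"
    by (auto simp: sets_surface_measure space_surface_measure)
qed simp

text \<open>Fubini, integrating over \<open>(x, y)\<close> last: for \<open>x \<noteq> y\<close> the section is a great sphere, of surface
  measure zero, and the diagonal is \<open>N \<otimes> N\<close>-null.\<close>
lemma null_sets_orthogonal_triples:
  fixes N :: "'a::euclidean_space measure"
  assumes "finite_measure N" "sets N = sets borel" "\<And>x. emeasure N {x} = 0"
  defines "Z \<equiv> {w \<in> space (surface_measure \<Otimes>\<^sub>M (N \<Otimes>\<^sub>M N)). (fst (snd w) - snd (snd w)) \<bullet> fst w = 0}"
  shows "Z \<in> null_sets (surface_measure \<Otimes>\<^sub>M (N \<Otimes>\<^sub>M N))"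
proof -
  interpret N: finite_measure N by fact
  interpret S: finite_measure "surface_measure :: 'a measure" by (rule finite_measure_surface_measure)
  let ?P = "N \<Otimes>\<^sub>M N"
  interpret P: finite_measure ?P by (rule finite_measure_pair_measure) (fact assms(1))+
  interpret SP: pair_sigma_finite "surface_measure :: 'a measure" ?P ..
  have borel: "surface_measure \<Otimes>\<^sub>M ?P \<rightarrow>\<^sub>M N = surface_measure \<Otimes>\<^sub>M ?P \<rightarrow>\<^sub>M borel"
    by (rule measurable_cong_sets[OF refl assms(2)])
  have "(\<lambda>w. fst (snd w)) \<in> surface_measure \<Otimes>\<^sub>M ?P \<rightarrow>\<^sub>M N"
    "(\<lambda>w. snd (snd w)) \<in> surface_measure \<Otimes>\<^sub>M ?P \<rightarrow>\<^sub>M N" by measurable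
  moreover have "(\<lambda>w. fst w) \<in> surface_measure \<Otimes>\<^sub>M ?P \<rightarrow>\<^sub>M borel"
    using measurable_comp[OF measurable_fst measurable_surface_measure_ident] by (simp add: comp_def)
  ultimately have "(\<lambda>w. (fst (snd w) - snd (snd w)) \<bullet> fst w) \<in> borel_measurable (surface_measure \<Otimes>\<^sub>M ?P)"
    unfolding borel by measurable
  hence Z: "Z \<in> sets (surface_measure \<Otimes>\<^sub>M ?P)" unfolding Z_def by measurable
  define D where "D = {p \<in> space ?P. fst p = snd p}"
  have D: "D \<in> null_sets ?P" unfolding D_def by (rule null_sets_pair_diagonal[OF assms(1-3)])
  have slice: "emeasure surface_measure ((\<lambda>z. (z, p)) -` Z) =
      emeasure (surface_measure :: 'a measure) (sphere 0 1) * indicator D p"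
    if p: "p \<in> space ?P" for p
  proof (cases "fst p = snd p")
    case True
    hence "(\<lambda>z. (z, p)) -` Z = sphere 0 1"
      using p by (auto simp: Z_def space_pair_measure space_surface_measure)
    thus ?thesis using True p by (simp add: D_def)
  next
    case False
    hence "(\<lambda>z. (z, p)) -` Z = {z \<in> sphere 0 1. z \<bullet> (fst p - snd p) = 0}"
      using p by (auto simp: Z_def space_pair_measure space_surface_measure inner_commute)
    thus ?thesis using False emeasure_surface_measure_orthogonal[of "fst p - snd p"] by (simp add: D_def)
  qed
  have "emeasure (surface_measure \<Otimes>\<^sub>M ?P) Z = (\<integral>\<^sup>+p. emeasure surface_measure ((\<lambda>z. (z, p)) -` Z) \<partial>?P)"
    by (rule SP.emeasure_pair_measure_alt2[OF Z])
  also have "\<dots> = (\<integral>\<^sup>+p. emeasure (surface_measure :: 'a measure) (sphere 0 1) * indicator D p \<partial>?P)"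
    by (rule nn_integral_cong) (rule slice)
  also have "\<dots> = 0" using null_setsD1[OF D] null_setsD2[OF D] by (simp add: nn_integral_cmult_indicator)
  finally show ?thesis using Z by (simp add: null_sets_def)
qed

text \<open>Fubini, integrating over the direction \<open>z\<close> last: for almost every \<open>z\<close> the section of the null
  set above is null, and it contains \<open>H \<times> H\<close> for every hyperplane \<open>H\<close> orthogonal to \<open>z\<close>.\<close>
lemma AE_surface_measure_hyperplanes_null:
  fixes N :: "'a::euclidean_space measure"
  assumes "finite_measure N" "sets N = sets borel" "\<And>x. emeasure N {x} = 0"
  shows "AE z in surface_measure. \<forall>t. emeasure N {x. x \<bullet> z = t} = 0"
proof -
  interpret N: finite_measure N by fact
  let ?P = "N \<Otimes>\<^sub>M N"
  interpret P: pair_sigma_finite N N ..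
  interpret S: finite_measure "surface_measure :: 'a measure" by (rule finite_measure_surface_measure)
  interpret SP: pair_sigma_finite "surface_measure :: 'a measure" ?P ..
  define Z where "Z = {w \<in> space (surface_measure \<Otimes>\<^sub>M ?P). (fst (snd w) - snd (snd w)) \<bullet> fst w = 0}"
  have Z: "Z \<in> null_sets (surface_measure \<Otimes>\<^sub>M ?P)"
    unfolding Z_def by (rule null_sets_orthogonal_triples[OF assms])
  hence "(\<integral>\<^sup>+z. emeasure ?P (Pair z -` Z) \<partial>surface_measure) = 0"
    using P.emeasure_pair_measure_alt[OF null_setsD2[OF Z]] by (simp add: null_setsD1)
  hence "AE z in surface_measure. emeasure ?P (Pair z -` Z) = 0"
    by (subst (asm) nn_integral_0_iff_AE) (auto intro: SP.measurable_emeasure_Pair1[OF null_setsD2[OF Z]])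
  thus ?thesis
  proof (rule AE_mp, intro AE_I2 impI allI)
    fix z t assume z: "z \<in> space surface_measure" and null: "emeasure ?P (Pair z -` Z) = 0"
    let ?H = "{x. x \<bullet> z = t}"
    have "?H \<times> ?H \<subseteq> Pair z -` Z"
      using z sets_eq_imp_space_eq[OF assms(2)] by (auto simp: Z_def space_pair_measure inner_diff_left)
    hence "emeasure ?P (?H \<times> ?H) = 0"
      using null sets_Pair1[OF null_setsD2[OF Z]] by (metis emeasure_mono le_zero_eq)
    moreover have H: "?H \<in> sets N" using assms(2) by simp
    ultimately have "emeasure N ?H * emeasure N ?H = 0" using N.emeasure_pair_measure_Times[OF H H] by simp
    thus "emeasure N ?H = 0" by simp
  qed
qed

section \<open>Compactly supported measures are determined by their projections\<close>

locale compactly_supported_measure = finite_measure N for N :: "'a::euclidean_space measure" +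
  fixes K :: "'a set"
  assumes sets_eq_borel: "sets N = sets borel" and compact_support: "compact K"
    and null_outside_support: "emeasure N (- K) = 0"
begin

lemma space_eq_UNIV: "space N = UNIV"
  using sets_eq_borel by (simp add: sets_eq_imp_space_eq)

lemma AE_in_support: "AE x in N. x \<in> K"
proof (rule AE_I')
  have "- K \<in> sets N"
    using sets_eq_borel compact_support by (simp add: compact_imp_closed borel_open open_Compl)
  thus "- K \<in> null_sets N" using null_outside_support by (simp add: null_sets_def)
qed auto

lemma borel_measurable_continuous: "continuous_on UNIV f \<Longrightarrow> f \<in> borel_measurable N"
  using borel_measurable_continuous_onI measurable_cong_sets[OF sets_eq_borel refl] by blast

lemma integrable_continuous:
  fixes f :: "'a \<Rightarrow> real"
  assumes "continuous_on UNIV f"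
  shows "integrable N f"
proof -
  have "compact (f ` K)"
    using assms compact_support by (metis compact_continuous_image continuous_on_subset top_greatest)
  then obtain B where B: "\<And>y. y \<in> f ` K \<Longrightarrow> norm y \<le> B"
    using compact_imp_bounded bounded_iff by metis
  have "AE x in N. norm (f x) \<le> B" using AE_in_support by eventually_elim (use B in auto)
  thus ?thesis using borel_measurable_continuous[OF assms] by (rule integrable_const_bound)
qed

lemma integral_continuous_dist:
  fixes f g :: "'a \<Rightarrow> real"
  assumes "continuous_on UNIV f" "continuous_on UNIV g" "\<And>x. x \<in> K \<Longrightarrow> \<bar>f x - g x\<bar> \<le> e"
  shows "\<bar>(\<integral>x. f x \<partial>N) - (\<integral>x. g x \<partial>N)\<bar> \<le> e * measure N (space N)"
proof -
  have f: "integrable N f" and g: "integrable N g" using assms integrable_continuous by auto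
  have "\<bar>(\<integral>x. f x \<partial>N) - (\<integral>x. g x \<partial>N)\<bar> = \<bar>\<integral>x. f x - g x \<partial>N\<bar>" using f g by simp
  also have "\<dots> \<le> (\<integral>x. \<bar>f x - g x\<bar> \<partial>N)" by (rule integral_abs_bound)
  also have "\<dots> \<le> (\<integral>x. e \<partial>N)"
    using f g AE_in_support assms(3) by (intro integral_mono_AE) (auto elim!: eventually_mono)
  finally show ?thesis by (simp add: mult.commute)
qed

lemma tendsto_integral_exp_inner:
  assumes "v \<longlonglongrightarrow> w"
  shows "(\<lambda>k. \<integral>x. exp (x \<bullet> v k) \<partial>N) \<longlonglongrightarrow> (\<integral>x. exp (x \<bullet> w) \<partial>N)"
proof -
  obtain B where B: "\<And>k. norm (v k) \<le> B"
    using convergent_imp_Bseq[of v] assms unfolding Bseq_def convergent_def by blast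
  obtain R where R: "\<And>x. x \<in> K \<Longrightarrow> norm x \<le> R"
    using compact_imp_bounded[OF compact_support] unfolding bounded_iff by blast
  have "AE x in N. norm (exp (x \<bullet> v k)) \<le> exp (R * B)" for k
    using AE_in_support
  proof eventually_elim
    case (elim x)
    have "0 \<le> R" using R[OF elim] norm_ge_zero[of x] by linarith
    have "x \<bullet> v k \<le> norm x * norm (v k)" by (rule norm_cauchy_schwarz)
    also have "\<dots> \<le> R * B" using R[OF elim] B[of k] \<open>0 \<le> R\<close> by (intro mult_mono) auto
    finally show ?case by simp
  qed
  moreover have "(\<lambda>x. exp (x \<bullet> v k)) \<in> borel_measurable N" "(\<lambda>x. exp (x \<bullet> w)) \<in> borel_measurable N" for k
    by (intro borel_measurable_continuous continuous_intros)+
  ultimately show ?thesis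
    using assms by (intro integral_dominated_convergence[where w="\<lambda>_. exp (R * B)"])
      (auto intro!: tendsto_intros)
qed

end

definition exp_sum :: "(real \<times> 'a) list \<Rightarrow> 'a::real_inner \<Rightarrow> real" where
  "exp_sum L x = (\<Sum>(a, w)\<leftarrow>L. a * exp (x \<bullet> w))"

lemma exp_sum_simps [simp]:
  "exp_sum [] x = 0"
  "exp_sum ((a, w) # L) x = a * exp (x \<bullet> w) + exp_sum L x"
  "exp_sum (L1 @ L2) x = exp_sum L1 x + exp_sum L2 x"
  by (auto simp: exp_sum_def)

lemma exp_sum_mult:
  "exp_sum L1 x * exp_sum L2 x = exp_sum (concat (map (\<lambda>(a, v). map (\<lambda>(b, w). (a * b, v + w)) L2) L1)) x"
proof -
  have "exp_sum (map (\<lambda>(b, w). (a * b, v + w)) L) x = a * exp (x \<bullet> v) * exp_sum L x" for a v L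
    by (induction L) (auto simp: algebra_simps inner_add_right exp_add)
  thus ?thesis by (induction L1) (auto simp: algebra_simps)
qed

lemma continuous_on_exp_sum: "continuous_on UNIV (exp_sum L)"
  unfolding exp_sum_def by (induction L) (auto intro!: continuous_intros)

lemma (in compactly_supported_measure) integral_exp_sum:
  "(\<integral>x. exp_sum L x \<partial>N) = (\<Sum>(a, w)\<leftarrow>L. a * (\<integral>x. exp (x \<bullet> w) \<partial>N))"
proof (induction L)
  case (Cons p L)
  obtain a w where p: "p = (a, w)" by (cases p)
  have "integrable N (\<lambda>x. a * exp (x \<bullet> w))" "integrable N (exp_sum L)"
    by (intro integrable_continuous continuous_intros continuous_on_exp_sum)+
  thus ?case using Cons by (simp add: p)
qed simp

lemma exp_sum_uniform_approx:
  fixes f :: "'a::euclidean_space \<Rightarrow> real"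
  assumes "compact K" "continuous_on K f" "e > 0"
  obtains L where "\<And>x. x \<in> K \<Longrightarrow> \<bar>f x - exp_sum L x\<bar> < e"
proof -
  let ?A = "\<lambda>g. \<exists>L. g = exp_sum L"
  have "\<exists>g. ?A g \<and> (\<forall>x\<in>K. \<bar>f x - g x\<bar> < e)"
  proof (rule Stone_Weierstrass_HOL[OF assms(1) _ _ _ _ _ assms(2,3)])
    show "?A (\<lambda>x. c)" for c by (rule exI[of _ "[(c, 0)]"]) (auto simp: fun_eq_iff)
    show "continuous_on K g" if "?A g" for g
      using that continuous_on_exp_sum continuous_on_subset by blast
    show "?A (\<lambda>x. g x + h x)" if gh: "?A g \<and> ?A h" for g h
    proof -
      obtain L1 L2 where "g = exp_sum L1" "h = exp_sum L2" using gh by blast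
      thus ?thesis by (intro exI[of _ "L1 @ L2"]) (simp add: fun_eq_iff)
    qed
    show "?A (\<lambda>x. g x * h x)" if gh: "?A g \<and> ?A h" for g h
    proof -
      obtain L1 L2 where "g = exp_sum L1" "h = exp_sum L2" using gh by blast
      thus ?thesis
        by (intro exI[of _ "concat (map (\<lambda>(a, v). map (\<lambda>(b, w). (a * b, v + w)) L2) L1)"])
          (simp add: fun_eq_iff exp_sum_mult)
    qed
    show "\<exists>g. ?A g \<and> g x \<noteq> g y" if "x \<in> K \<and> y \<in> K \<and> x \<noteq> y" for x y
    proof (intro exI conjI)
      have "x \<bullet> (x - y) - y \<bullet> (x - y) = (x - y) \<bullet> (x - y)" by (simp add: inner_diff_left)
      hence "x \<bullet> (x - y) \<noteq> y \<bullet> (x - y)" using that by auto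
      thus "exp_sum [(1, x - y)] x \<noteq> exp_sum [(1, x - y)] y" by simp
    qed blast
  qed
  thus ?thesis using that by blast
qed

lemma indicator_closed_approx:
  fixes C :: "'a::metric_space set"
  assumes "closed C" "C \<noteq> {}"
  defines "s n x \<equiv> max 0 (1 - real n * infdist x C)"
  shows "continuous_on UNIV (s n)" "\<bar>s n x\<bar> \<le> 1" "(\<lambda>n. s n x) \<longlonglongrightarrow> indicator C x"
proof -
  show "continuous_on UNIV (s n)" "\<bar>s n x\<bar> \<le> 1"
    using infdist_nonneg[of x C] unfolding s_def by (auto intro!: continuous_intros)
  show "(\<lambda>n. s n x) \<longlonglongrightarrow> indicator C x"
  proof (cases "x \<in> C")
    case True thus ?thesis by (simp add: s_def)
  next
    case False
    hence "infdist x C > 0" using in_closed_iff_infdist_zero[OF assms(1,2)] infdist_nonneg[of x C] by auto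
    then obtain n0 :: nat where n0: "real n0 * infdist x C > 1" by (metis reals_Archimedean3)
    have "s n x = 0" if "n \<ge> n0" for n
    proof -
      have "real n0 * infdist x C \<le> real n * infdist x C"
        using that \<open>infdist x C > 0\<close> by (intro mult_right_mono) auto
      thus ?thesis using n0 unfolding s_def by auto
    qed
    hence "\<forall>\<^sub>F n in sequentially. s n x = indicator C x"
      using False by (auto simp: eventually_sequentially)
    thus ?thesis by (rule tendsto_eventually)
  qed
qed

lemma finite_measure_eqI_integral_continuous:
  fixes N1 N2 :: "'a::metric_space measure"
  assumes "finite_measure N1" "finite_measure N2" "sets N1 = sets borel" "sets N2 = sets borel"
    and integral_eq: "\<And>f :: 'a \<Rightarrow> real. continuous_on UNIV f \<Longrightarrow> (\<And>x. \<bar>f x\<bar> \<le> 1) \<Longrightarrow>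
      (\<integral>x. f x \<partial>N1) = (\<integral>x. f x \<partial>N2)"
  shows "N1 = N2"
proof -
  interpret N1: finite_measure N1 by fact
  interpret N2: finite_measure N2 by fact
  have "measure N1 C = measure N2 C" if C: "closed C" "C \<noteq> {}" for C
  proof -
    define s where "s n x = max 0 (1 - real n * infdist x C)" for n x
    note s = indicator_closed_approx[OF C, folded s_def]
    have "(\<lambda>x. s n x) \<in> borel_measurable N" "indicator C \<in> borel_measurable N"
      if "sets N = sets borel" for N n
      using borel_measurable_continuous_onI[OF s(1)] measurable_cong_sets[OF that refl]
        borel_measurable_indicator[of C N] that C by auto
    hence lim: "(\<lambda>n. \<integral>x. s n x \<partial>N) \<longlonglongrightarrow> (\<integral>x. indicator C x \<partial>N)"
      if "finite_measure N" "sets N = sets borel" for N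
      using that C s(2,3) by (intro integral_dominated_convergence[where w="\<lambda>_. 1"])
        (auto simp: finite_measure.integrable_const)
    have "(\<integral>x. s n x \<partial>N1) = (\<integral>x. s n x \<partial>N2)" for n
      by (rule integral_eq) (use s in auto)
    hence "(\<lambda>n. \<integral>x. s n x \<partial>N2) \<longlonglongrightarrow> (\<integral>x. indicator C x \<partial>N1)"
      using lim[OF assms(1,3)] by simp
    hence "(\<integral>x. indicator C x \<partial>N1) = (\<integral>x. (indicator C x :: real) \<partial>N2)"
      using lim[OF assms(2,4)] by (rule LIMSEQ_unique)
    thus ?thesis using C assms(3,4) by simp
  qed
  hence "emeasure N1 C = emeasure N2 C" if "closed C" for C
    using that N1.emeasure_eq_measure N2.emeasure_eq_measure by (cases "C = {}") auto
  moreover have "sets N1 = sigma_sets UNIV (Collect closed)" "sets N2 = sigma_sets UNIV (Collect closed)"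
    using assms(3,4) by (simp_all add: borel_eq_closed)
  ultimately show ?thesis
    by (intro measure_eqI_generator_eq[of "Collect closed" UNIV _ _ "\<lambda>_. UNIV"])
      (auto simp: Int_stable_def N1.emeasure_finite)
qed

lemma compactly_supported_measure_eqI_exp:
  fixes N1 N2 :: "'a::euclidean_space measure"
  assumes "compactly_supported_measure N1 K" "compactly_supported_measure N2 K"
    and exp_eq: "\<And>w. (\<integral>x. exp (x \<bullet> w) \<partial>N1) = (\<integral>x. exp (x \<bullet> w) \<partial>N2)"
  shows "N1 = N2"
proof -
  interpret N1: compactly_supported_measure N1 K by fact
  interpret N2: compactly_supported_measure N2 K by fact
  have exp_sum_eq: "(\<integral>x. exp_sum L x \<partial>N1) = (\<integral>x. exp_sum L x \<partial>N2)" for L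
    by (simp add: N1.integral_exp_sum N2.integral_exp_sum exp_eq)
  let ?m = "measure N1 (space N1) + measure N2 (space N2) + 1"
  have close: "\<bar>(\<integral>x. f x \<partial>N1) - (\<integral>x. f x \<partial>N2)\<bar> \<le> e"
    if f: "continuous_on UNIV f" and "e > 0" for f :: "'a \<Rightarrow> real" and e :: real
  proof -
    have "?m > 0" by (simp add: add_nonneg_pos)
    hence "e / ?m > 0" using \<open>e > 0\<close> by simp
    then obtain L where L: "\<And>x. x \<in> K \<Longrightarrow> \<bar>f x - exp_sum L x\<bar> < e / ?m"
      using exp_sum_uniform_approx[OF N1.compact_support continuous_on_subset[OF f subset_UNIV]] by blast
    have "\<bar>(\<integral>x. f x \<partial>N1) - (\<integral>x. exp_sum L x \<partial>N1)\<bar> \<le> e / ?m * measure N1 (space N1)"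
      "\<bar>(\<integral>x. f x \<partial>N2) - (\<integral>x. exp_sum L x \<partial>N2)\<bar> \<le> e / ?m * measure N2 (space N2)"
      using L by (intro N1.integral_continuous_dist N2.integral_continuous_dist f continuous_on_exp_sum
          less_imp_le, blast)+
    hence "\<bar>(\<integral>x. f x \<partial>N1) - (\<integral>x. f x \<partial>N2)\<bar> \<le>
        e / ?m * measure N1 (space N1) + e / ?m * measure N2 (space N2)"
      using exp_sum_eq[of L] by linarith
    also have "\<dots> = e / ?m * (?m - 1)" by (simp add: algebra_simps add_divide_distrib)
    also have "\<dots> \<le> e" using \<open>?m > 0\<close> \<open>e > 0\<close> by (simp add: field_simps)
    finally show ?thesis .
  qed
  have "(\<integral>x. f x \<partial>N1) = (\<integral>x. f x \<partial>N2)" if "continuous_on UNIV f" for f :: "'a \<Rightarrow> real"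
  proof -
    have "\<bar>(\<integral>x. f x \<partial>N1) - (\<integral>x. f x \<partial>N2)\<bar> \<le> 0"
      by (rule field_le_epsilon) (simp add: close[OF that])
    thus ?thesis by simp
  qed
  thus ?thesis
    by (intro finite_measure_eqI_integral_continuous N1.sets_eq_borel N2.sets_eq_borel)
      (simp_all add: N1.finite_measure_axioms N2.finite_measure_axioms)
qed

lemma integral_inner_eq_if_projections_eq:
  fixes N1 N2 :: "'a::euclidean_space measure" and g :: "real \<Rightarrow> real"
  assumes "sets N1 = sets borel" "sets N2 = sets borel"
    and "\<And>B. B \<in> sets borel \<Longrightarrow> emeasure N1 {x. x \<bullet> z \<in> B} = emeasure N2 {x. x \<bullet> z \<in> B}"
    and "g \<in> borel_measurable borel"
  shows "(\<integral>x. g (x \<bullet> z) \<partial>N1) = (\<integral>x. g (x \<bullet> z) \<partial>N2)"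
proof -
  have inner: "(\<lambda>x. x \<bullet> z) \<in> N \<rightarrow>\<^sub>M borel" if "sets N = sets borel" for N :: "'a measure"
  proof -
    have "(\<lambda>x::'a. x \<bullet> z) \<in> borel_measurable borel" by measurable
    thus ?thesis using measurable_cong_sets[OF that refl] by blast
  qed
  have "distr N1 borel (\<lambda>x. x \<bullet> z) = distr N2 borel (\<lambda>x. x \<bullet> z)"
  proof (rule measure_eqI)
    fix B assume "B \<in> sets (distr N1 borel (\<lambda>x. x \<bullet> z))"
    hence B: "B \<in> sets borel" by simp
    show "emeasure (distr N1 borel (\<lambda>x. x \<bullet> z)) B = emeasure (distr N2 borel (\<lambda>x. x \<bullet> z)) B"
      using assms(3)[OF B] emeasure_distr[OF inner[OF assms(1)] B] emeasure_distr[OF inner[OF assms(2)] B]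
        sets_eq_imp_space_eq[OF assms(1)] sets_eq_imp_space_eq[OF assms(2)] by (simp add: vimage_def)
  qed simp
  thus ?thesis
    using integral_distr[OF inner[OF assms(1)] assms(4)] integral_distr[OF inner[OF assms(2)] assms(4)] by simp
qed

text \<open>Cramer--Wold for compactly supported measures: the exponential moment in direction \<open>w\<close>
  is a limit of moments in directions where the projections agree, since these are dense.\<close>
lemma compactly_supported_measure_eqI_projections:
  fixes N1 N2 :: "'a::euclidean_space measure"
  assumes "compactly_supported_measure N1 K" "compactly_supported_measure N2 K"
    and "AE z in surface_measure. \<forall>B\<in>sets borel. emeasure N1 {x. x \<bullet> z \<in> B} = emeasure N2 {x. x \<bullet> z \<in> B}"
  shows "N1 = N2"
proof (rule compactly_supported_measure_eqI_exp[OF assms(1,2)])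
  interpret N1: compactly_supported_measure N1 K by fact
  interpret N2: compactly_supported_measure N2 K by fact
  fix w :: 'a
  obtain z0 where z0: "z0 \<in> sphere 0 1" "norm w *\<^sub>R z0 = w"
  proof (cases "w = 0")
    case True
    obtain z0 :: 'a where "norm z0 = 1" using vector_choose_size[of 1] by auto
    thus ?thesis using True by (intro that[of z0]) simp_all
  next
    case False
    thus ?thesis by (intro that[of "w /\<^sub>R norm w"]) simp_all
  qed
  obtain zs where zs: "\<And>k. zs k \<in> sphere 0 1"
    "\<And>k. \<forall>B\<in>sets borel. emeasure N1 {x. x \<bullet> zs k \<in> B} = emeasure N2 {x. x \<bullet> zs k \<in> B}"
    "zs \<longlonglongrightarrow> z0"
    by (rule AE_surface_measure_tendsto[OF assms(3) z0(1)]) (rule that)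
  have "(\<lambda>k. norm w *\<^sub>R zs k) \<longlonglongrightarrow> w"
    using tendsto_scaleR[OF tendsto_const zs(3), of "norm w"] z0(2) by simp
  hence lim: "(\<lambda>k. \<integral>x. exp (x \<bullet> (norm w *\<^sub>R zs k)) \<partial>N) \<longlonglongrightarrow> (\<integral>x. exp (x \<bullet> w) \<partial>N)"
    if "compactly_supported_measure N K" for N
    by (rule compactly_supported_measure.tendsto_integral_exp_inner[OF that])
  have "(\<integral>x. exp (x \<bullet> (norm w *\<^sub>R zs k)) \<partial>N1) = (\<integral>x. exp (x \<bullet> (norm w *\<^sub>R zs k)) \<partial>N2)" for k
    using integral_inner_eq_if_projections_eq[OF N1.sets_eq_borel N2.sets_eq_borel zs(2)[rule_format],
        of "\<lambda>t. exp (norm w * t)"]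
    by (simp add: mult.commute)
  hence "(\<lambda>k. \<integral>x. exp (x \<bullet> (norm w *\<^sub>R zs k)) \<partial>N2) \<longlonglongrightarrow> (\<integral>x. exp (x \<bullet> w) \<partial>N1)"
    using lim[OF assms(1)] by simp
  thus "(\<integral>x. exp (x \<bullet> w) \<partial>N1) = (\<integral>x. exp (x \<bullet> w) \<partial>N2)"
    using lim[OF assms(2)] by (rule LIMSEQ_unique)
qed

section \<open>Purely atomic set functions\<close>

definition purely_atomic :: "'a measure \<Rightarrow> ('a set \<Rightarrow> 'b::real_normed_vector) \<Rightarrow> bool" where
  "purely_atomic M \<nu> \<longleftrightarrow>
     (\<exists>c. (\<lambda>x. norm (c x)) summable_on UNIV \<and> (\<forall>A\<in>sets M. \<nu> A = (\<Sum>\<^sub>\<infinity>x\<in>A. c x)))"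

lemma discrete_cmeasure_iff_purely_atomic: "discrete_cmeasure M \<nu> \<longleftrightarrow> purely_atomic M \<nu>"
  by (simp add: discrete_cmeasure_def purely_atomic_def)

lemma purely_atomic_cong:
  "(\<And>A. A \<in> sets M \<Longrightarrow> \<nu> A = \<nu>' A) \<Longrightarrow> purely_atomic M \<nu> \<longleftrightarrow> purely_atomic M \<nu>'"
  by (simp add: purely_atomic_def)

lemma abs_summable_on_infsum_fibres:
  fixes c :: "'a \<Rightarrow> 'b::banach"
  assumes "(\<lambda>x. norm (c x)) summable_on UNIV"
  shows "(\<lambda>t. norm (\<Sum>\<^sub>\<infinity>x\<in>g -` {t}. c x)) summable_on UNIV"
proof -
  have bij: "bij_betw (\<lambda>x. (g x, x)) UNIV (Sigma UNIV (\<lambda>t. g -` {t}))"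
    by (rule bij_betwI[where g=snd]) auto
  hence "(\<lambda>(t, x). norm (c x)) summable_on Sigma UNIV (\<lambda>t. g -` {t})"
    using summable_on_reindex_bij_betw[OF bij, of "\<lambda>(t, x). norm (c x)"] assms by simp
  hence "(\<lambda>t. \<Sum>\<^sub>\<infinity>x\<in>g -` {t}. norm (c x)) summable_on UNIV"
    using summable_on_Sigma_banach[of "\<lambda>t x. norm (c x)" UNIV "\<lambda>t. g -` {t}"] by simp
  hence "(\<lambda>t. norm (\<Sum>\<^sub>\<infinity>x\<in>g -` {t}. norm (c x))) summable_on UNIV"
    by (simp add: abs_of_nonneg[OF infsum_nonneg])
  thus ?thesis
  proof (rule Infinite_Sum.abs_summable_on_comparison_test)
    fix t
    have "norm (\<Sum>\<^sub>\<infinity>x\<in>g -` {t}. c x) \<le> (\<Sum>\<^sub>\<infinity>x\<in>g -` {t}. norm (c x))"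
      by (rule norm_infsum_bound, rule summable_on_subset_banach[OF assms subset_UNIV])
    thus "norm (\<Sum>\<^sub>\<infinity>x\<in>g -` {t}. c x) \<le> norm (\<Sum>\<^sub>\<infinity>x\<in>g -` {t}. norm (c x))"
      by (simp add: abs_of_nonneg[OF infsum_nonneg])
  qed
qed

lemma infsum_vimage_fibres:
  fixes c :: "'a \<Rightarrow> 'b::banach"
  assumes "(\<lambda>x. norm (c x)) summable_on UNIV"
  shows "(\<Sum>\<^sub>\<infinity>x\<in>g -` B. c x) = (\<Sum>\<^sub>\<infinity>t\<in>B. \<Sum>\<^sub>\<infinity>x\<in>g -` {t}. c x)"
proof -
  have bij: "bij_betw (\<lambda>x. (g x, x)) (g -` B) (Sigma B (\<lambda>t. g -` {t}))"
    by (rule bij_betwI[where g=snd]) auto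
  have "c summable_on g -` B"
    using abs_summable_summable[OF assms] by (rule summable_on_subset_banach) simp
  hence "(\<lambda>(t, x). c x) summable_on Sigma B (\<lambda>t. g -` {t})"
    using summable_on_reindex_bij_betw[OF bij, of "\<lambda>(t, x). c x"] by simp
  hence "(\<Sum>\<^sub>\<infinity>t\<in>B. \<Sum>\<^sub>\<infinity>x\<in>g -` {t}. c x) = (\<Sum>\<^sub>\<infinity>(t, x)\<in>Sigma B (\<lambda>t. g -` {t}). c x)"
    by (rule infsum_Sigma'_banach)
  also have "\<dots> = (\<Sum>\<^sub>\<infinity>x\<in>g -` B. c x)"
    using infsum_reindex_bij_betw[OF bij, of "\<lambda>(t, x). c x"] by simp
  finally show ?thesis by simp
qed

lemma purely_atomic_vimage:
  fixes \<nu> :: "'a set \<Rightarrow> 'b::banach"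
  assumes "purely_atomic M \<nu>" "\<And>B. B \<in> sets N \<Longrightarrow> g -` B \<in> sets M"
  shows "purely_atomic N (\<lambda>B. \<nu> (g -` B))"
proof -
  obtain c where c: "(\<lambda>x. norm (c x)) summable_on UNIV" "\<And>A. A \<in> sets M \<Longrightarrow> \<nu> A = (\<Sum>\<^sub>\<infinity>x\<in>A. c x)"
    using assms(1) unfolding purely_atomic_def by blast
  show ?thesis unfolding purely_atomic_def
  proof (intro exI[of _ "\<lambda>t. \<Sum>\<^sub>\<infinity>x\<in>g -` {t}. c x"] conjI ballI)
    show "(\<lambda>t. norm (\<Sum>\<^sub>\<infinity>x\<in>g -` {t}. c x)) summable_on UNIV"
      by (rule abs_summable_on_infsum_fibres[OF c(1)])
    fix B assume "B \<in> sets N"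
    thus "\<nu> (g -` B) = (\<Sum>\<^sub>\<infinity>t\<in>B. \<Sum>\<^sub>\<infinity>x\<in>g -` {t}. c x)"
      using c(2)[OF assms(2)] infsum_vimage_fibres[OF c(1)] by simp
  qed
qed

lemma purely_atomic_bounded_linear:
  fixes \<nu> :: "'a set \<Rightarrow> 'b::banach"
  assumes "purely_atomic M \<nu>" "bounded_linear f"
  shows "purely_atomic M (\<lambda>A. f (\<nu> A))"
proof -
  interpret f: bounded_linear f by fact
  obtain c where c: "(\<lambda>x. norm (c x)) summable_on UNIV" "\<And>A. A \<in> sets M \<Longrightarrow> \<nu> A = (\<Sum>\<^sub>\<infinity>x\<in>A. c x)"
    using assms(1) unfolding purely_atomic_def by blast
  obtain K where K: "\<And>x. norm (f x) \<le> norm x * K" using f.bounded by blast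
  have "(\<lambda>x. norm (K *\<^sub>R c x)) summable_on UNIV"
    using summable_on_cmult_right[OF c(1), of "\<bar>K\<bar>"] by simp
  hence "(\<lambda>x. norm (f (c x))) summable_on UNIV"
  proof (rule Infinite_Sum.abs_summable_on_comparison_test)
    show "norm (f (c x)) \<le> norm (K *\<^sub>R c x)" for x
      using K[of "c x"] abs_ge_self[of "K * norm (c x)"] by (simp add: mult.commute abs_mult)
  qed
  moreover have "f (\<nu> A) = (\<Sum>\<^sub>\<infinity>x\<in>A. f (c x))" if "A \<in> sets M" for A
  proof -
    have "c summable_on A"
      using abs_summable_summable[OF c(1)] by (rule summable_on_subset_banach) simp
    hence "((\<lambda>x. f (c x)) has_sum f (infsum c A)) A"
      by (intro has_sum_bounded_linear[OF assms(2)] has_sum_infsum)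
    thus ?thesis using c(2)[OF that] by (simp add: infsumI)
  qed
  ultimately show ?thesis
    unfolding purely_atomic_def by (intro exI[of _ "\<lambda>x. f (c x)"] conjI ballI)
qed

lemma purely_atomic_complex_iff:
  fixes \<nu> :: "'a set \<Rightarrow> complex"
  shows "purely_atomic M \<nu> \<longleftrightarrow> purely_atomic M (\<lambda>A. Re (\<nu> A)) \<and> purely_atomic M (\<lambda>A. Im (\<nu> A))"
proof (intro iffI conjI)
  assume "purely_atomic M \<nu>"
  thus "purely_atomic M (\<lambda>A. Re (\<nu> A))" "purely_atomic M (\<lambda>A. Im (\<nu> A))"
    by (rule purely_atomic_bounded_linear[of M \<nu> Re, OF _ bounded_linear_Re],
        rule purely_atomic_bounded_linear[of M \<nu> Im, OF _ bounded_linear_Im])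
next
  assume "purely_atomic M (\<lambda>A. Re (\<nu> A)) \<and> purely_atomic M (\<lambda>A. Im (\<nu> A))"
  then obtain a b :: "'a \<Rightarrow> real" where
    a: "(\<lambda>x. norm (a x)) summable_on UNIV" "\<And>A. A \<in> sets M \<Longrightarrow> Re (\<nu> A) = (\<Sum>\<^sub>\<infinity>x\<in>A. a x)" and
    b: "(\<lambda>x. norm (b x)) summable_on UNIV" "\<And>A. A \<in> sets M \<Longrightarrow> Im (\<nu> A) = (\<Sum>\<^sub>\<infinity>x\<in>A. b x)"
    unfolding purely_atomic_def by blast
  have "(\<lambda>x. norm (norm (a x) + norm (b x))) summable_on UNIV"
    using summable_on_add[OF a(1) b(1)] by simp
  hence "(\<lambda>x. norm (Complex (a x) (b x))) summable_on UNIV"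
  proof (rule Infinite_Sum.abs_summable_on_comparison_test)
    show "norm (Complex (a x) (b x)) \<le> norm (norm (a x) + norm (b x))" for x
      using cmod_le[of "Complex (a x) (b x)"] by simp
  qed
  moreover have "\<nu> A = (\<Sum>\<^sub>\<infinity>x\<in>A. Complex (a x) (b x))" if "A \<in> sets M" for A
  proof -
    have "a summable_on A" "b summable_on A"
      using summable_on_subset_banach[OF abs_summable_summable[OF a(1)]]
        summable_on_subset_banach[OF abs_summable_summable[OF b(1)]] by auto
    hence "((\<lambda>x. Complex (a x) (b x)) has_sum Complex (Re (\<nu> A)) (Im (\<nu> A))) A"
      unfolding Complex_eq using a(2)[OF that] b(2)[OF that]
      by (intro has_sum_add has_sum_cmult_right has_sum_of_real) (auto intro: has_sum_infsum)
    hence "infsum (\<lambda>x. Complex (a x) (b x)) A = Complex (Re (\<nu> A)) (Im (\<nu> A))" by (rule infsumI)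
    thus ?thesis by simp
  qed
  ultimately show "purely_atomic M \<nu>"
    unfolding purely_atomic_def by (intro exI[of _ "\<lambda>x. Complex (a x) (b x)"] conjI ballI)
qed

section \<open>Discreteness from almost all projections\<close>

lemma sets_vimage_inner:
  fixes z :: "'a::euclidean_space"
  assumes "B \<in> sets borel"
  shows "{x::'a. x \<bullet> z \<in> B} \<in> sets borel"
proof -
  have "(\<lambda>x::'a. x \<bullet> z) \<in> borel_measurable borel" by measurable
  hence "(\<lambda>x::'a. x \<bullet> z) -` B \<inter> space borel \<in> sets borel" using assms by (rule measurable_sets)
  thus ?thesis by (simp add: vimage_def)
qed

lemma (in finite_measure) has_sum_measure_singletons:
  assumes "countable S" "\<And>x. {x} \<in> sets M"
  shows "((\<lambda>x. measure M {x}) has_sum measure M S) S"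
proof (cases "finite S")
  case True
  hence "measure M S = (\<Sum>x\<in>S. measure M {x})"
    using assms(2) by (intro measure_eq_sum_singleton) (auto simp: emeasure_finite)
  thus ?thesis using has_sum_finite[OF True] by simp
next
  case False
  let ?g = "from_nat_into S"
  have bij: "bij_betw ?g UNIV S" using assms(1) False by (rule bij_betw_from_nat_into)
  have "range (\<lambda>n. {?g n}) \<subseteq> sets M" using assms(2) by auto
  moreover have "disjoint_family (\<lambda>n. {?g n})"
    using bij unfolding disjoint_family_on_def bij_betw_def inj_on_def by auto
  ultimately have "(\<lambda>n. measure M {?g n}) sums measure M (\<Union>n. {?g n})"
    by (rule finite_measure_UNION)
  moreover have "(\<Union>n. {?g n}) = S" using bij by (auto simp: bij_betw_def)
  ultimately have "(\<lambda>n. measure M {?g n}) sums measure M S" by simp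
  hence "((\<lambda>n. measure M {?g n}) has_sum measure M S) UNIV" by (rule sums_nonneg_imp_has_sum) simp
  thus ?thesis using has_sum_reindex_bij_betw[OF bij, of "\<lambda>x. measure M {x}"] by simp
qed

lemma (in finite_measure) has_sum_measure_atoms:
  assumes "\<And>x. {x} \<in> sets M" "countable A0" "{x. measure M {x} \<noteq> 0} \<subseteq> A0" "A \<in> sets M"
  shows "((\<lambda>x. measure M {x}) has_sum (measure M A - measure M (A - A0))) A"
proof -
  have A0: "A0 \<in> sets M" using assms(1) by (rule sets.countable[OF _ assms(2)])
  have "((\<lambda>x. measure M {x}) has_sum measure M (A \<inter> A0)) (A \<inter> A0)"
    using assms(1,2) by (intro has_sum_measure_singletons) auto
  moreover have "measure M (A \<inter> A0) = measure M A - measure M (A - A0)"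
    using finite_measure_Diff'[OF assms(4) A0] by simp
  ultimately show ?thesis
    using has_sum_cong_neutral[of "A \<inter> A0" A "\<lambda>x. measure M {x}" "\<lambda>x. measure M {x}"] assms(3) by auto
qed

lemma (in compactly_supported_measure) diffuse_part:
  assumes "countable A0" "{x. measure N {x} \<noteq> 0} \<subseteq> A0"
  shows "compactly_supported_measure (density N (indicator (- A0))) K"
    and "\<And>X. X \<in> sets borel \<Longrightarrow> emeasure (density N (indicator (- A0))) X = emeasure N (X - A0)"
    and "\<And>x. emeasure (density N (indicator (- A0))) {x} = 0"
proof -
  let ?D = "density N (indicator (- A0))"
  have "A0 \<in> sets borel" by (intro sets.countable[OF _ assms(1)]) simp
  hence "- A0 \<in> sets N" by (simp add: sets_eq_borel borel_comp)
  thus D: "emeasure ?D X = emeasure N (X - A0)" if "X \<in> sets borel" for X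
    using emeasure_restricted[of "- A0" N X] that sets_eq_borel by (simp add: Diff_eq Int_commute)
  show "compactly_supported_measure ?D K"
  proof (intro compactly_supported_measure.intro compactly_supported_measure_axioms.intro finite_measureI)
    show "sets ?D = sets borel" by (simp add: sets_eq_borel)
    show "emeasure ?D (space ?D) \<noteq> \<infinity>"
      using D[of UNIV] emeasure_finite[of "UNIV - A0"] by (simp add: space_eq_UNIV)
    have "- K \<in> sets borel" using compact_support by (simp add: compact_imp_closed borel_open open_Compl)
    moreover have "emeasure N (- K - A0) \<le> emeasure N (- K)"
      using calculation by (intro emeasure_mono) (auto simp: sets_eq_borel)
    ultimately show "emeasure ?D (- K) = 0" using D null_outside_support by simp
  qed (rule compact_support)
  show "emeasure ?D {x} = 0" for x
    using D[of "{x}"] assms(2) by (cases "x \<in> A0") (auto simp: emeasure_eq_measure insert_Diff_if)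
qed

text \<open>Off the countable set \<open>T\<close> consisting of the atoms of the projected signed measure and the
  projections of the atoms of \<open>M\<^sub>1, M\<^sub>2\<close>, the projections of \<open>M\<^sub>1\<close> and \<open>M\<^sub>2\<close> cancel and coincide
  with those of the diffuse parts \<open>D\<^sub>1, D\<^sub>2\<close>; and removing \<open>T\<close> does not change the projections of
  \<open>D\<^sub>1, D\<^sub>2\<close>, since their hyperplanes orthogonal to \<open>z\<close> are null.\<close>
lemma emeasure_vimage_inner_diffuse_parts_eq:
  fixes M1 M2 D1 D2 :: "'a::euclidean_space measure"
  assumes M: "finite_measure M1" "finite_measure M2" "sets M1 = sets borel" "sets M2 = sets borel"
    and D: "sets D1 = sets borel" "sets D2 = sets borel" "countable A0"
      "\<And>X. X \<in> sets borel \<Longrightarrow> emeasure D1 X = emeasure M1 (X - A0)"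
      "\<And>X. X \<in> sets borel \<Longrightarrow> emeasure D2 X = emeasure M2 (X - A0)"
    and null: "\<And>t. emeasure D1 {x. x \<bullet> z = t} = 0" "\<And>t. emeasure D2 {x. x \<bullet> z = t} = 0"
    and atomic: "purely_atomic borel (\<lambda>B. measure M1 {x. x \<bullet> z \<in> B} - measure M2 {x. x \<bullet> z \<in> B})"
    and B: "B \<in> sets borel"
  shows "emeasure D1 {x. x \<bullet> z \<in> B} = emeasure D2 {x. x \<bullet> z \<in> B}"
proof -
  interpret M1: finite_measure M1 by fact
  interpret M2: finite_measure M2 by fact
  obtain c where c: "(\<lambda>t. norm (c t)) summable_on UNIV"
    "\<And>B. B \<in> sets borel \<Longrightarrow> measure M1 {x. x \<bullet> z \<in> B} - measure M2 {x. x \<bullet> z \<in> B} = (\<Sum>\<^sub>\<infinity>t\<in>B. c t)"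
    using atomic unfolding purely_atomic_def by blast
  define T where "T = {t. c t \<noteq> 0} \<union> (\<lambda>x. x \<bullet> z) ` A0"
  have "countable T" unfolding T_def using abs_summable_countable[OF c(1)] D(3) by simp
  hence T: "T \<in> sets borel" by (intro sets.countable[OF _ \<open>countable T\<close>]) simp
  have B_T: "B - T \<in> sets borel" using B T by auto
  have "emeasure D {x. x \<bullet> z \<in> B} = emeasure D {x. x \<bullet> z \<in> B - T}"
    if "sets D = sets borel" "\<And>t. emeasure D {x. x \<bullet> z = t} = 0" for D :: "'a measure"
  proof -
    have "{x. x \<bullet> z \<in> T} = (\<Union>t\<in>T. {x. x \<bullet> z = t})" by auto
    also have "\<dots> \<in> null_sets D"
      using \<open>countable T\<close> that by (intro null_sets_UN') (auto simp: null_sets_def)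
    finally have "{x. x \<bullet> z \<in> B \<inter> T} \<in> null_sets D"
      by (rule null_sets_subset) (use B T that in \<open>auto intro: sets_vimage_inner\<close>)
    moreover have "{x. x \<bullet> z \<in> B} = {x. x \<bullet> z \<in> B - T} \<union> {x. x \<bullet> z \<in> B \<inter> T}" by auto
    moreover have "{x. x \<bullet> z \<in> B - T} \<in> sets D" using sets_vimage_inner[OF B_T] that(1) by simp
    ultimately show ?thesis by (metis emeasure_Un_null_set)
  qed
  moreover have "{x. x \<bullet> z \<in> B - T} - A0 = {x. x \<bullet> z \<in> B - T}" by (auto simp: T_def)
  moreover have "measure M1 {x. x \<bullet> z \<in> B - T} = measure M2 {x. x \<bullet> z \<in> B - T}"
    using c(2)[OF B_T] infsum_0[of "B - T" c] by (auto simp: T_def)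
  ultimately show ?thesis
    using D(1,2) D(4,5)[OF sets_vimage_inner[OF B_T]] null
    by (simp add: M1.emeasure_eq_measure M2.emeasure_eq_measure)
qed

lemma purely_atomic_diff_if_AE_projections:
  fixes M1 M2 :: "'a::euclidean_space measure"
  assumes "compactly_supported_measure M1 K" "compactly_supported_measure M2 K"
    and "AE z in surface_measure.
      purely_atomic borel (\<lambda>B. measure M1 {x. x \<bullet> z \<in> B} - measure M2 {x. x \<bullet> z \<in> B})"
  shows "purely_atomic borel (\<lambda>A. measure M1 A - measure M2 A)"
proof -
  interpret M1: compactly_supported_measure M1 K by fact
  interpret M2: compactly_supported_measure M2 K by fact
  define A0 where "A0 = {x. measure M1 {x} \<noteq> 0} \<union> {x. measure M2 {x} \<noteq> 0}"
  have A0: "countable A0" using M1.countable_support M2.countable_support by (simp add: A0_def)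
  have atoms: "{x. measure M1 {x} \<noteq> 0} \<subseteq> A0" "{x. measure M2 {x} \<noteq> 0} \<subseteq> A0"
    by (auto simp: A0_def)
  let ?D1 = "density M1 (indicator (- A0))" and ?D2 = "density M2 (indicator (- A0))"
  note diffuse1 = M1.diffuse_part[OF A0 atoms(1)] and diffuse2 = M2.diffuse_part[OF A0 atoms(2)]
  interpret D1: compactly_supported_measure ?D1 K by (rule diffuse1(1))
  interpret D2: compactly_supported_measure ?D2 K by (rule diffuse2(1))
  have "AE z in surface_measure. \<forall>t. emeasure ?D1 {x. x \<bullet> z = t} = 0"
    by (rule AE_surface_measure_hyperplanes_null[OF D1.finite_measure_axioms D1.sets_eq_borel diffuse1(3)])
  moreover have "AE z in surface_measure. \<forall>t. emeasure ?D2 {x. x \<bullet> z = t} = 0"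
    by (rule AE_surface_measure_hyperplanes_null[OF D2.finite_measure_axioms D2.sets_eq_borel diffuse2(3)])
  ultimately have "AE z in surface_measure.
    \<forall>B\<in>sets borel. emeasure ?D1 {x. x \<bullet> z \<in> B} = emeasure ?D2 {x. x \<bullet> z \<in> B}"
    using assms(3)
  proof eventually_elim
    case (elim z)
    show ?case
      by (intro ballI emeasure_vimage_inner_diffuse_parts_eq[OF M1.finite_measure_axioms M2.finite_measure_axioms
          M1.sets_eq_borel M2.sets_eq_borel D1.sets_eq_borel D2.sets_eq_borel A0 diffuse1(2) diffuse2(2)])
        (use elim in auto)
  qed
  hence "?D1 = ?D2" by (rule compactly_supported_measure_eqI_projections[OF diffuse1(1) diffuse2(1)])
  hence "measure M1 (A - A0) = measure M2 (A - A0)" if "A \<in> sets borel" for A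
    using diffuse1(2)[OF that] diffuse2(2)[OF that] by (simp add: M1.emeasure_eq_measure M2.emeasure_eq_measure)
  hence sums: "((\<lambda>x. measure M1 {x} - measure M2 {x}) has_sum (measure M1 A - measure M2 A)) A"
    if "A \<in> sets borel" for A
    using has_sum_add[OF M1.has_sum_measure_atoms[OF _ A0 atoms(1)]
        has_sum_uminusI[OF M2.has_sum_measure_atoms[OF _ A0 atoms(2)]]]
      that M1.sets_eq_borel M2.sets_eq_borel by fastforce
  show ?thesis unfolding purely_atomic_def
  proof (intro exI[of _ "\<lambda>x. measure M1 {x} - measure M2 {x}"] conjI ballI)
    show "(\<lambda>x. norm (measure M1 {x} - measure M2 {x})) summable_on UNIV"
      using summable_on_iff_abs_summable_on_real[THEN iffD1, OF has_sum_imp_summable[OF sums]] by simp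
    show "measure M1 A - measure M2 A = (\<Sum>\<^sub>\<infinity>x\<in>A. measure M1 {x} - measure M2 {x})" if "A \<in> sets borel" for A
      using sums[OF that] by (simp add: infsumI)
  qed
qed

theorem purely_atomic_if_AE_projections_purely_atomic:
  fixes \<nu> :: "'a::euclidean_space set \<Rightarrow> real"
  assumes "signed_measure borel \<nu>" "compact K" "\<And>A. A \<in> sets borel \<Longrightarrow> A \<inter> K = {} \<Longrightarrow> \<nu> A = 0"
    and "AE z in surface_measure. purely_atomic borel (\<lambda>B. \<nu> {x. x \<bullet> z \<in> B})"
  shows "purely_atomic borel \<nu>"
proof -
  interpret signed_measure borel \<nu> by fact
  obtain M1 M2 where diff: "\<And>A. A \<in> sets borel \<Longrightarrow> \<nu> A = measure M1 A - measure M2 A"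
    and M: "finite_measure M1" "finite_measure M2" "sets M1 = sets borel" "sets M2 = sets borel"
    and null: "\<And>A. A \<in> sets borel \<Longrightarrow> \<forall>B\<in>sets borel. B \<subseteq> A \<longrightarrow> \<nu> B = 0 \<Longrightarrow>
      emeasure M1 A = 0 \<and> emeasure M2 A = 0"
    by (rule Jordan_decomposition) (rule that)
  have "- K \<in> sets borel" using assms(2) by (simp add: compact_imp_closed borel_open open_Compl)
  hence "emeasure M1 (- K) = 0 \<and> emeasure M2 (- K) = 0" using assms(3) by (intro null) auto
  hence "compactly_supported_measure M1 K" "compactly_supported_measure M2 K"
    using M assms(2)
    by (auto intro!: compactly_supported_measure.intro compactly_supported_measure_axioms.intro)
  moreover have "AE z in surface_measure.
    purely_atomic borel (\<lambda>B. measure M1 {x. x \<bullet> z \<in> B} - measure M2 {x. x \<bullet> z \<in> B})"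
    using assms(4) by eventually_elim (simp add: purely_atomic_cong[OF diff[OF sets_vimage_inner]])
  ultimately have "purely_atomic borel (\<lambda>A. measure M1 A - measure M2 A)"
    by (rule purely_atomic_diff_if_AE_projections)
  thus ?thesis by (simp add: purely_atomic_cong[OF diff])
qed

lemma discrete_cmeasure_if_AE_projections_discrete:
  fixes \<mu> :: "'a::euclidean_space set \<Rightarrow> complex"
  assumes "complex_measure borel \<mu>" "compactly_supported_cmeasure \<mu>"
    and "AE z in surface_measure. discrete_cmeasure borel (proj_cmeasure \<mu> z)"
  shows "discrete_cmeasure borel \<mu>"
proof -
  obtain K where K: "compact K" "\<And>A. A \<in> sets borel \<Longrightarrow> A \<inter> K = {} \<Longrightarrow> \<mu> A = 0"
    using assms(2) unfolding compactly_supported_cmeasure_def by blast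
  have "purely_atomic borel (\<lambda>A. f (\<mu> A))" if f: "bounded_linear f" for f :: "complex \<Rightarrow> real"
  proof (rule purely_atomic_if_AE_projections_purely_atomic[OF _ K(1)])
    show "signed_measure borel (\<lambda>A. f (\<mu> A))"
      using assms(1) bounded_linear.sums[OF f] by unfold_locales (auto simp: complex_measure_def)
    show "f (\<mu> A) = 0" if "A \<in> sets borel" "A \<inter> K = {}" for A
      using K(2)[OF that] linear_0[OF bounded_linear.linear[OF f]] by simp
    show "AE z in surface_measure. purely_atomic borel (\<lambda>B. f (\<mu> {x. x \<bullet> z \<in> B}))"
      using assms(3) by eventually_elim
        (simp add: purely_atomic_bounded_linear[OF _ f] discrete_cmeasure_iff_purely_atomic proj_cmeasure_def)
  qed
  thus ?thesis
    using bounded_linear_Re bounded_linear_Im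
    by (simp add: discrete_cmeasure_iff_purely_atomic purely_atomic_complex_iff)
qed

theorem corollary5p5:
  fixes \<mu> :: "'a::euclidean_space set \<Rightarrow> complex"
  assumes "complex_measure borel \<mu>"
    and "compactly_supported_cmeasure \<mu>"
  shows "(discrete_cmeasure borel \<mu> \<longleftrightarrow>
            (\<forall>\<zeta> \<in> sphere 0 1. discrete_cmeasure borel (proj_cmeasure \<mu> \<zeta>)))
       \<and> ((\<forall>\<zeta> \<in> sphere 0 1. discrete_cmeasure borel (proj_cmeasure \<mu> \<zeta>)) \<longleftrightarrow>
            (AE \<zeta> in surface_measure. discrete_cmeasure borel (proj_cmeasure \<mu> \<zeta>)))"
proof -
  have projections_discrete: "discrete_cmeasure borel (proj_cmeasure \<mu> \<zeta>)" if "discrete_cmeasure borel \<mu>" for \<zeta>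
    using purely_atomic_vimage[of borel \<mu> borel "\<lambda>x. x \<bullet> \<zeta>"] sets_vimage_inner[of _ \<zeta>] that
    by (simp add: discrete_cmeasure_iff_purely_atomic proj_cmeasure_def vimage_def)
  have AE_projections_discrete: "AE \<zeta> in surface_measure. discrete_cmeasure borel (proj_cmeasure \<mu> \<zeta>)"
    if "\<forall>\<zeta> \<in> sphere 0 1. discrete_cmeasure borel (proj_cmeasure \<mu> \<zeta>)"
    using that by (intro AE_I2) (simp add: space_surface_measure)
  show ?thesis
    using projections_discrete AE_projections_discrete discrete_cmeasure_if_AE_projections_discrete[OF assms]
    by blast
qed

end
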